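(* Let $G$ be a topological group and $A$ a topological $G$-module. For every $p$, the homomorphism $H(j_h^p)^{-1}\circ H(j_v^p)\colon H_c^p(G,A)\to H_{lc}^p(G,A)$ coincides with the homomorphism induced in cohomology by the inclusion $C_c^*(G,A)\hookrightarrow C_{lc}^*(G,A)$.
   Context: A topological $G$-module is an abelian topological group $A$ with an action of $G$ by group automorphisms such that $G\times A\to A$ is continuous. For an identity neighbourhood $U$ of $G$ put $\Gamma_U^0:=G$ and, for $q\ge1$, $\Gamma_U^q:=\{(g_0,\dots,g_q)\in G^{q+1}\mid g_i^{-1}g_j\in U\ \forall i,j\}$. $G$ acts on maps $f\colon G^{n+1}\to A$ by $(g.f)(g_0,\dots,g_n)=g.f(g^{-1}g_0,\dots,g^{-1}g_n)$, and $df(g_0,\dots,g_{n+1})=\sum_i(-1)^if(g_0,\dots,\widehat{g_i},\dots,g_{n+1})$. $C_c^n(G,A)$ is the complex of continuous equivariant maps $G^{n+1}\to A$ with cohomology $H_c^n(G,A)$; $C_{lc}^n(G,A)$ is the complex of equivariant maps whose restriction to $\Gamma_U^n$ is continuous for some identity neighbourhood $U$, with cohomology $H_{lc}^n(G,A)$. $A_{lc}^{p,q}(G,A)$ is the group of maps $f\colon G^{p+1}\times G^{q+1}\to A$ whose restriction to $G^{p+1}\times\Gamma_U^q$ is continuous for some identity neighbourhood $U$, with $d_hf(x_0,\dots,x_{p+1},\vec y)=\sum_i(-1)^if(x_0,\dots,\widehat{x_i},\dots,x_{p+1},\vec y)$ and $d_vf(\vec x,y_0,\dots,y_{q+1})=(-1)^p\sum_i(-1)^if(\vec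 x,y_0,\dots,\widehat{y_i},\dots,y_{q+1})$; $G$ acts by $(g.f)(\vec x,\vec y)=g.f(g^{-1}\vec x,g^{-1}\vec y)$, and $\mathrm{Tot}\,A_{lc}^{*,*}(G,A)^G$ is the total complex of the fixed-point double complex (differential $d_h+d_v$). $j_h\colon C_{lc}^*(G,A)\to\mathrm{Tot}\,A_{lc}^{*,*}(G,A)^G$, $j_h(f)(x_0,\vec y)=f(\vec y)$, and $j_v\colon C_c^*(G,A)\to\mathrm{Tot}\,A_{lc}^{*,*}(G,A)^G$, $j_v(f)(\vec x,y_0)=f(\vec x)$, are chain maps, and $j_h$ induces an isomorphism $H(j_h^p)$ in cohomology. *)

theory Defs
  imports "HOL-Analysis.Analysis" "HOL-Library.Function_Algebras"
begin

text \<open>The topological group G is the whole type 'g, written additively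
(class group_add, which is NOT assumed commutative): g h is written g + h, g^-1 is - g,
the identity is 0. Tuples (g_0,...,g_n) in G^(n+1) are extensional functions
nat => 'g on the index set {..n}, carrying the product topology.
The abelian topological group A is the whole type 'a; the action is act.\<close>

definition tuples :: "nat \<Rightarrow> (nat \<Rightarrow> 'g) set" where
  "tuples n = PiE {..n} (\<lambda>_. UNIV)"

definition PT :: "nat \<Rightarrow> (nat \<Rightarrow> 'g::topological_space) topology" where
  "PT n = product_topology (\<lambda>_. euclidean) {..n}"

definition identity_nbhd :: "'g::{topological_space,group_add} set \<Rightarrow> bool" where
  "identity_nbhd U \<longleftrightarrow> (\<exists>V. open V \<and> 0 \<in> V \<and> V \<subseteq> U)"

definition Gamma :: "'g::group_add set \<Rightarrow> nat \<Rightarrow> (nat \<Rightarrow> 'g) set" where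
  "Gamma U q = (if q = 0 then tuples 0
      else {y \<in> tuples q. \<forall>i\<le>q. \<forall>j\<le>q. - y i + y j \<in> U})"

definition tmul :: "nat \<Rightarrow> 'g::group_add \<Rightarrow> (nat \<Rightarrow> 'g) \<Rightarrow> (nat \<Rightarrow> 'g)" where
  "tmul n g x = restrict (\<lambda>k. g + x k) {..n}"

text \<open>face map: delete the i-th entry of an (n+2)-tuple, giving an (n+1)-tuple\<close>
definition face :: "nat \<Rightarrow> nat \<Rightarrow> (nat \<Rightarrow> 'g) \<Rightarrow> (nat \<Rightarrow> 'g)" where
  "face n i x = restrict (\<lambda>k. if k < i then x k else x (Suc k)) {..n}"

definition sgnop :: "nat \<Rightarrow> 'a::ab_group_add \<Rightarrow> 'a" where
  "sgnop i a = (if even i then a else - a)"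

definition top_G_module :: "('g::{topological_space,group_add} \<Rightarrow> 'a::{topological_space,ab_group_add} \<Rightarrow> 'a) \<Rightarrow> bool" where
  "top_G_module act \<longleftrightarrow>
     continuous_on UNIV (\<lambda>z::'a\<times>'a. fst z + snd z) \<and> continuous_on UNIV (\<lambda>a::'a. - a) \<and>
     (\<forall>a. act 0 a = a) \<and> (\<forall>g h a. act (g + h) a = act g (act h a)) \<and>
     (\<forall>g a b. act g (a + b) = act g a + act g b) \<and>
     continuous_on UNIV (\<lambda>z::'g\<times>'a. act (fst z) (snd z))"

definition top_group :: "'g::{topological_space,group_add} itself \<Rightarrow> bool" where
  "top_group _ \<longleftrightarrow> continuous_on UNIV (\<lambda>z::'g\<times>'g. fst z + snd z) \<and> continuous_on UNIV (\<lambda>g::'g. - g)"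

definition cdiff :: "nat \<Rightarrow> ((nat \<Rightarrow> 'g) \<Rightarrow> 'a::ab_group_add) \<Rightarrow> ((nat \<Rightarrow> 'g) \<Rightarrow> 'a)" where
  "cdiff n f = (\<lambda>x. if x \<in> tuples (Suc n) then (\<Sum>i\<le>Suc n. sgnop i (f (face n i x))) else 0)"

definition equivariant :: "('g::group_add \<Rightarrow> 'a \<Rightarrow> 'a) \<Rightarrow> nat \<Rightarrow> ((nat \<Rightarrow> 'g) \<Rightarrow> 'a) \<Rightarrow> bool" where
  "equivariant act n f \<longleftrightarrow> (\<forall>g. \<forall>x\<in>tuples n. act g (f (tmul n (- g) x)) = f x)"

definition Cc :: "('g::{topological_space,group_add} \<Rightarrow> 'a::{topological_space,ab_group_add} \<Rightarrow> 'a)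
    \<Rightarrow> nat \<Rightarrow> ((nat \<Rightarrow> 'g) \<Rightarrow> 'a) set" where
  "Cc act n = {f. (\<forall>x. x \<notin> tuples n \<longrightarrow> f x = 0) \<and> equivariant act n f \<and>
                  continuous_map (PT n) euclidean f}"

definition Clc :: "('g::{topological_space,group_add} \<Rightarrow> 'a::{topological_space,ab_group_add} \<Rightarrow> 'a)
    \<Rightarrow> nat \<Rightarrow> ((nat \<Rightarrow> 'g) \<Rightarrow> 'a) set" where
  "Clc act n = {f. (\<forall>x. x \<notin> tuples n \<longrightarrow> f x = 0) \<and> equivariant act n f \<and>
                   (\<exists>U. identity_nbhd U \<and>
                        continuous_map (subtopology (PT n) (Gamma U n)) euclidean f)}"

definition dh :: "nat \<Rightarrow> nat \<Rightarrow> ((nat \<Rightarrow> 'g) \<times> (nat \<Rightarrow> 'g) \<Rightarrow> 'a::ab_group_add)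
    \<Rightarrow> ((nat \<Rightarrow> 'g) \<times> (nat \<Rightarrow> 'g) \<Rightarrow> 'a)" where
  "dh p q f = (\<lambda>(x,y). if x \<in> tuples (Suc p) \<and> y \<in> tuples q
      then (\<Sum>i\<le>Suc p. sgnop i (f (face p i x, y))) else 0)"

definition dv :: "nat \<Rightarrow> nat \<Rightarrow> ((nat \<Rightarrow> 'g) \<times> (nat \<Rightarrow> 'g) \<Rightarrow> 'a::ab_group_add)
    \<Rightarrow> ((nat \<Rightarrow> 'g) \<times> (nat \<Rightarrow> 'g) \<Rightarrow> 'a)" where
  "dv p q f = (\<lambda>(x,y). if x \<in> tuples p \<and> y \<in> tuples (Suc q)
      then sgnop p (\<Sum>i\<le>Suc q. sgnop i (f (x, face q i y))) else 0)"

definition Alc_fix :: "('g::{topological_space,group_add} \<Rightarrow> 'a::{topological_space,ab_group_add} \<Rightarrow> 'a)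
    \<Rightarrow> nat \<Rightarrow> nat \<Rightarrow> ((nat \<Rightarrow> 'g) \<times> (nat \<Rightarrow> 'g) \<Rightarrow> 'a) set" where
  "Alc_fix act p q = {f. (\<forall>z. z \<notin> tuples p \<times> tuples q \<longrightarrow> f z = 0) \<and>
      (\<forall>g. \<forall>x\<in>tuples p. \<forall>y\<in>tuples q. act g (f (tmul p (- g) x, tmul q (- g) y)) = f (x, y)) \<and>
      (\<exists>U. identity_nbhd U \<and>
           continuous_map (subtopology (prod_topology (PT p) (PT q)) (tuples p \<times> Gamma U q)) euclidean f)}"

text \<open>An element of Tot^n is the family of its components F p in bidegree (p, n - p).\<close>
definition Tot :: "('g::{topological_space,group_add} \<Rightarrow> 'a::{topological_space,ab_group_add} \<Rightarrow> 'a)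
    \<Rightarrow> nat \<Rightarrow> (nat \<Rightarrow> (nat \<Rightarrow> 'g) \<times> (nat \<Rightarrow> 'g) \<Rightarrow> 'a) set" where
  "Tot act n = {F. (\<forall>p\<le>n. F p \<in> Alc_fix act p (n - p)) \<and> (\<forall>p>n. F p = 0)}"

definition dTot :: "nat \<Rightarrow> (nat \<Rightarrow> (nat \<Rightarrow> 'g) \<times> (nat \<Rightarrow> 'g) \<Rightarrow> 'a::ab_group_add)
    \<Rightarrow> (nat \<Rightarrow> (nat \<Rightarrow> 'g) \<times> (nat \<Rightarrow> 'g) \<Rightarrow> 'a)" where
  "dTot n F = (\<lambda>p. if p \<le> Suc n then
       (if 1 \<le> p then dh (p - 1) (Suc n - p) (F (p - 1)) else 0)
     + (if p \<le> n then dv p (n - p) (F p) else 0) else 0)"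

definition jh :: "nat \<Rightarrow> ((nat \<Rightarrow> 'g) \<Rightarrow> 'a::zero) \<Rightarrow> (nat \<Rightarrow> (nat \<Rightarrow> 'g) \<times> (nat \<Rightarrow> 'g) \<Rightarrow> 'a)" where
  "jh n f = (\<lambda>p. if p = 0 then (\<lambda>(x,y). if x \<in> tuples 0 \<and> y \<in> tuples n then f y else 0)
                else (\<lambda>_. 0))"

definition jv :: "nat \<Rightarrow> ((nat \<Rightarrow> 'g) \<Rightarrow> 'a::zero) \<Rightarrow> (nat \<Rightarrow> (nat \<Rightarrow> 'g) \<times> (nat \<Rightarrow> 'g) \<Rightarrow> 'a)" where
  "jv n f = (\<lambda>p. if p = n then (\<lambda>(x,y). if x \<in> tuples n \<and> y \<in> tuples 0 then f x else 0)
                else (\<lambda>_. 0))"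

definition cocycles :: "(nat \<Rightarrow> 'c::ab_group_add set) \<Rightarrow> (nat \<Rightarrow> 'c \<Rightarrow> 'c) \<Rightarrow> nat \<Rightarrow> 'c set" where
  "cocycles C d n = {f \<in> C n. d n f = 0}"

definition coboundaries :: "(nat \<Rightarrow> 'c::ab_group_add set) \<Rightarrow> (nat \<Rightarrow> 'c \<Rightarrow> 'c) \<Rightarrow> nat \<Rightarrow> 'c set" where
  "coboundaries C d n = (if n = 0 then {0} else d (n - 1) ` C (n - 1))"

definition coh_class :: "(nat \<Rightarrow> 'c::ab_group_add set) \<Rightarrow> (nat \<Rightarrow> 'c \<Rightarrow> 'c) \<Rightarrow> nat \<Rightarrow> 'c \<Rightarrow> 'c set" where
  "coh_class C d n f = {f + b | b. b \<in> coboundaries C d n}"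

definition cohomology :: "(nat \<Rightarrow> 'c::ab_group_add set) \<Rightarrow> (nat \<Rightarrow> 'c \<Rightarrow> 'c) \<Rightarrow> nat \<Rightarrow> 'c set set" where
  "cohomology C d n = coh_class C d n ` cocycles C d n"

definition induced :: "(nat \<Rightarrow> 'c \<Rightarrow> 'e) \<Rightarrow> (nat \<Rightarrow> 'e::ab_group_add set) \<Rightarrow> (nat \<Rightarrow> 'e \<Rightarrow> 'e)
    \<Rightarrow> nat \<Rightarrow> 'c set \<Rightarrow> 'e set" where
  "induced phi C' d' n c = coh_class C' d' n (phi n (SOME z. z \<in> c))"

end

(*
  The map F \<mapsto> (y \<mapsto> \<Sum>p. F p (front p-face of y, back (n-p)-face of y)) is a chain map
  Tot A_lc(G,A)^G \<rightarrow> C_lc(G,A) left inverse to jh, so H(jh) is injective. For a continuous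
  cocycle f, jv f and jh f are cohomologous: the concatenation homotopy
  (K f)_p (x, y) = (-1)^(p+1) f (x_0, ..., x_p, y_0, ..., y_q) satisfies d K + K d = jv - jh.
  Hence H(jv)[f] = H(jh)[f], which H(jh)^-1 sends to the class of f in H_lc.
*)
theory Submission
  imports Defs
begin

section \<open>Cohomology of abstract cochain complexes\<close>

definition add_subgroup :: "'c::ab_group_add set \<Rightarrow> bool" where
  "add_subgroup B \<longleftrightarrow> 0 \<in> B \<and> (\<forall>u\<in>B. \<forall>v\<in>B. u + v \<in> B) \<and> (\<forall>u\<in>B. - u \<in> B)"

lemma add_subgroupI:
  assumes "0 \<in> B" "\<And>u v. u \<in> B \<Longrightarrow> v \<in> B \<Longrightarrow> u + v \<in> B" "\<And>u. u \<in> B \<Longrightarrow> - u \<in> B"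
  shows "add_subgroup B"
  using assms by (simp add: add_subgroup_def)

lemma add_subgroup_diff: "add_subgroup B \<Longrightarrow> u \<in> B \<Longrightarrow> v \<in> B \<Longrightarrow> u - v \<in> B"
  unfolding add_subgroup_def by (metis diff_conv_add_uminus)

lemma add_subgroup_Int: "add_subgroup A \<Longrightarrow> add_subgroup B \<Longrightarrow> add_subgroup (A \<inter> B)"
  by (simp add: add_subgroup_def)

locale cochain_complex =
  fixes C :: "nat \<Rightarrow> 'c::ab_group_add set" and d :: "nat \<Rightarrow> 'c \<Rightarrow> 'c"
  assumes add_subgroup_C: "add_subgroup (C n)"
    and additive_d: "Modules.additive (d n)"
begin

lemma add_subgroup_coboundaries: "add_subgroup (coboundaries C d n)"
proof (cases n)
  case 0
  then show ?thesis by (simp add: coboundaries_def add_subgroup_def)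
next
  case (Suc m)
  interpret Modules.additive "d m" by (rule additive_d)
  have "coboundaries C d n = d m ` C m"
    using Suc by (simp add: coboundaries_def)
  moreover have "0 \<in> d m ` C m" "\<And>u v. u \<in> C m \<Longrightarrow> v \<in> C m \<Longrightarrow> d m u + d m v \<in> d m ` C m"
    "\<And>u. u \<in> C m \<Longrightarrow> - d m u \<in> d m ` C m"
    using add_subgroup_C[of m] unfolding add_subgroup_def
    by (metis image_eqI zero, metis image_eqI add, metis image_eqI minus)
  ultimately show ?thesis
    by (auto intro!: add_subgroupI)
qed

lemma coh_class_eq_iff: "coh_class C d n a = coh_class C d n a' \<longleftrightarrow> a - a' \<in> coboundaries C d n"
proof
  have "a \<in> coh_class C d n a"
    using add_subgroup_coboundaries unfolding coh_class_def add_subgroup_def by force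
  moreover assume "coh_class C d n a = coh_class C d n a'"
  ultimately have "a \<in> coh_class C d n a'"
    by simp
  then obtain b where "b \<in> coboundaries C d n" "a = a' + b"
    unfolding coh_class_def by blast
  then show "a - a' \<in> coboundaries C d n"
    by simp
next
  assume diff: "a - a' \<in> coboundaries C d n"
  have "(a - a') + b \<in> coboundaries C d n" "b - (a - a') \<in> coboundaries C d n"
    if "b \<in> coboundaries C d n" for b
    using add_subgroup_coboundaries[of n] diff that
    by (auto simp: add_subgroup_def intro: add_subgroup_diff)
  moreover have "a + b = a' + ((a - a') + b)" "a' + b = a + (b - (a - a'))" for b
    by simp_all
  ultimately show "coh_class C d n a = coh_class C d n a'"
    unfolding coh_class_def by blast
qed

end

locale cochain_map = dom: cochain_complex C d + cod: cochain_complex C' d'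
  for C :: "nat \<Rightarrow> 'c::ab_group_add set" and d and C' :: "nat \<Rightarrow> 'e::ab_group_add set" and d' +
  fixes \<phi> :: "nat \<Rightarrow> 'c \<Rightarrow> 'e"
  assumes additive_map: "Modules.additive (\<phi> n)"
    and map_closed: "f \<in> C n \<Longrightarrow> \<phi> n f \<in> C' n"
    and map_d: "f \<in> C n \<Longrightarrow> \<phi> (Suc n) (d n f) = d' n (\<phi> n f)"
begin

lemma map_coboundaries: "b \<in> coboundaries C d n \<Longrightarrow> \<phi> n b \<in> coboundaries C' d' n"
  using Modules.additive.zero[OF additive_map] map_closed map_d
  by (cases n) (auto simp: coboundaries_def)

lemma induced_coh_class: "induced \<phi> C' d' n (coh_class C d n f) = coh_class C' d' n (\<phi> n f)"
proof -
  define z where "z = (SOME z. z \<in> coh_class C d n f)"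
  have "f \<in> coh_class C d n f"
    using dom.coh_class_eq_iff[of n f f] by (auto simp: coh_class_def)
  then have "z \<in> coh_class C d n f"
    unfolding z_def by (rule someI)
  then obtain b where "b \<in> coboundaries C d n" "z = f + b"
    by (auto simp: coh_class_def)
  then have "\<phi> n z - \<phi> n f \<in> coboundaries C' d' n"
    by (simp add: Modules.additive.add[OF additive_map] map_coboundaries)
  then show ?thesis
    unfolding induced_def z_def[symmetric] by (simp add: cod.coh_class_eq_iff)
qed

lemma inj_on_induced_left_inverse:
  assumes "cochain_map C' d' C d \<psi>" and left_inverse: "\<And>f. f \<in> C n \<Longrightarrow> \<psi> n (\<phi> n f) = f"
  shows "inj_on (induced \<phi> C' d' n) (cohomology C d n)"
proof (rule inj_onI)
  interpret \<psi>: cochain_map C' d' C d \<psi> by (rule assms(1))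
  fix x1 x2
  assume "x1 \<in> cohomology C d n" "x2 \<in> cohomology C d n"
  then obtain f1 f2 where f: "f1 \<in> C n" "f2 \<in> C n"
    and x: "x1 = coh_class C d n f1" "x2 = coh_class C d n f2"
    by (auto simp: cohomology_def cocycles_def)
  assume "induced \<phi> C' d' n x1 = induced \<phi> C' d' n x2"
  then have "\<phi> n f1 - \<phi> n f2 \<in> coboundaries C' d' n"
    by (simp add: x induced_coh_class cod.coh_class_eq_iff)
  then have "\<psi> n (\<phi> n f1 - \<phi> n f2) \<in> coboundaries C d n"
    by (rule \<psi>.map_coboundaries)
  then have "f1 - f2 \<in> coboundaries C d n"
    by (simp only: Modules.additive.diff[OF \<psi>.additive_map] f[THEN left_inverse])
  then show "x1 = x2"
    unfolding x by (rule dom.coh_class_eq_iff[THEN iffD2])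
qed

end

lemma restrict_in_tuples [simp]: "restrict f {..n} \<in> tuples n"
  by (simp add: tuples_def)

lemma face_in_tuples [simp]: "face n i x \<in> tuples n"
  by (simp add: face_def)

lemma tmul_in_tuples [simp]: "tmul n g x \<in> tuples n"
  by (simp add: tmul_def)

section \<open>Tuples, signs and the chain maps jh and jv\<close>

lemma sum_atMost_Suc_split:
  "p \<le> m \<Longrightarrow> (\<Sum>i\<le>Suc m. h i) = (\<Sum>i\<le>p. h i) + (\<Sum>j\<le>m - p. (h (Suc p + j) :: 'a::comm_monoid_add))"
proof (induction m)
  case (Suc m)
  then show ?case
    by (cases "p = Suc m") (simp_all add: Suc_diff_le add.assoc)
qed simp

lemma tuples_eqI: "x \<in> tuples n \<Longrightarrow> y \<in> tuples n \<Longrightarrow> (\<And>k. k \<le> n \<Longrightarrow> x k = y k) \<Longrightarrow> x = y"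
  unfolding tuples_def by (rule PiE_ext) auto

lemma additive_sgnop: "Modules.additive (sgnop i)"
  by unfold_locales (simp add: sgnop_def)

lemma sgnop_simps [simp]:
  "sgnop 0 a = a" "sgnop (Suc i) a = - sgnop i a" "sgnop i 0 = 0" "sgnop i (- a) = - sgnop i a"
  by (simp_all add: sgnop_def)

lemma sgnop_sgnop: "sgnop i (sgnop j a) = sgnop (i + j) a"
  by (simp add: sgnop_def)

lemmas sgnop_add = Modules.additive.add[OF additive_sgnop]
lemmas sgnop_sum = Modules.additive.sum[OF additive_sgnop]

lemma additive_cdiff: "Modules.additive (cdiff n)"
  by unfold_locales (auto simp: cdiff_def fun_eq_iff sgnop_add sum.distrib)

lemma dh_add: "dh p q (u + v) = dh p q u + dh p q v"
  by (auto simp: dh_def fun_eq_iff sgnop_add sum.distrib)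

lemma dv_add: "dv p q (u + v) = dv p q u + dv p q v"
  by (auto simp: dv_def fun_eq_iff sgnop_add sum.distrib)

lemma dh_dv_zero [simp]: "dh p q (\<lambda>_. 0) = (\<lambda>_. 0)" "dv p q (\<lambda>_. 0) = (\<lambda>_. 0)"
  by (auto simp: dh_def dv_def fun_eq_iff)

lemma additive_dTot: "Modules.additive (dTot n)"
  by unfold_locales (rule ext, simp add: dTot_def dh_add dv_add)

lemma additive_jh: "Modules.additive (jh n :: ((nat \<Rightarrow> 'g) \<Rightarrow> 'a::ab_group_add) \<Rightarrow> _)"
  by unfold_locales (auto simp: jh_def fun_eq_iff)

lemma additive_jv: "Modules.additive (jv n :: ((nat \<Rightarrow> 'g) \<Rightarrow> 'a::ab_group_add) \<Rightarrow> _)"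
  by unfold_locales (auto simp: jv_def fun_eq_iff)

lemma jh_cdiff: "jh (Suc n) (cdiff n f) = dTot n (jh n f)"
proof (rule ext)
  fix p
  show "jh (Suc n) (cdiff n f) p = dTot n (jh n f) p"
  proof (cases "p = 0")
    case True
    then show ?thesis
      by (auto simp: jh_def dTot_def dv_def cdiff_def fun_eq_iff)
  next
    case False
    then have "jh n f p = (\<lambda>_. 0)" "dh (p - 1) (Suc n - p) (jh n f (p - 1)) = (\<lambda>_. 0)"
      by (cases "p = 1", auto simp: jh_def dh_def fun_eq_iff)+
    with False show ?thesis
      by (simp add: jh_def dTot_def zero_fun_def)
  qed
qed

lemma jv_cdiff: "jv (Suc n) (cdiff n f) = dTot n (jv n f)"
proof -
  have "dv n 0 (jv n f n) = (\<lambda>_. 0)"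
    by (auto simp: dv_def jv_def fun_eq_iff)
  then show ?thesis
    by (auto simp: jv_def dTot_def dh_def cdiff_def fun_eq_iff)
qed

section \<open>A left inverse of jh\<close>

definition front_face :: "nat \<Rightarrow> (nat \<Rightarrow> 'g) \<Rightarrow> (nat \<Rightarrow> 'g)" where
  "front_face p y = restrict y {..p}"

definition back_face :: "nat \<Rightarrow> nat \<Rightarrow> (nat \<Rightarrow> 'g) \<Rightarrow> (nat \<Rightarrow> 'g)" where
  "back_face p n y = restrict (\<lambda>k. y (p + k)) {..n - p}"

definition tot_to_cochain :: "nat \<Rightarrow> (nat \<Rightarrow> (nat \<Rightarrow> 'g) \<times> (nat \<Rightarrow> 'g) \<Rightarrow> 'a::ab_group_add)
    \<Rightarrow> (nat \<Rightarrow> 'g) \<Rightarrow> 'a" where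
  "tot_to_cochain n F = (\<lambda>y. if y \<in> tuples n then \<Sum>p\<le>n. F p (front_face p y, back_face p n y) else 0)"

lemma front_face_in_tuples [simp]: "front_face p y \<in> tuples p"
  by (simp add: front_face_def)

lemma back_face_in_tuples [simp]: "back_face p n y \<in> tuples (n - p)"
  by (simp add: back_face_def)

lemma face_front_face: "i \<le> p \<Longrightarrow> p \<le> m \<Longrightarrow> face p i (front_face (Suc p) y) = front_face p (face m i y)"
  by (auto simp: face_def front_face_def fun_eq_iff)

lemma face_front_face_last: "face p (Suc p) (front_face (Suc p) y) = front_face p y"
  by (auto simp: face_def front_face_def fun_eq_iff)

lemma front_face_face_high: "p \<le> m \<Longrightarrow> front_face p (face m (Suc (p + j)) y) = front_face p y"
  by (auto simp: face_def front_face_def fun_eq_iff)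

lemma back_face_face_low: "i \<le> p \<Longrightarrow> p \<le> m \<Longrightarrow> back_face p m (face m i y) = back_face (Suc p) (Suc m) y"
  by (auto simp: face_def back_face_def fun_eq_iff)

lemma face_back_face_first:
  "p \<le> m \<Longrightarrow> face (m - p) 0 (back_face p (Suc m) y) = back_face (Suc p) (Suc m) y"
  by (auto simp: face_def back_face_def fun_eq_iff)

lemma back_face_face_high:
  "p \<le> m \<Longrightarrow> back_face p m (face m (Suc (p + j)) y) = face (m - p) (Suc j) (back_face p (Suc m) y)"
  by (auto simp: face_def back_face_def fun_eq_iff)

lemma additive_tot_to_cochain: "Modules.additive (tot_to_cochain n)"
  by unfold_locales (auto simp: tot_to_cochain_def fun_eq_iff sum.distrib)

lemma tot_to_cochain_jh: "(\<And>x. x \<notin> tuples n \<Longrightarrow> f x = 0) \<Longrightarrow> tot_to_cochain n (jh n f) = f"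
proof (rule ext)
  fix y
  assume support: "\<And>x. x \<notin> tuples n \<Longrightarrow> f x = 0"
  show "tot_to_cochain n (jh n f) y = f y"
  proof (cases "y \<in> tuples n")
    case True
    then have "back_face 0 n y = y"
      by (intro tuples_eqI) (auto simp: back_face_def)
    with True show ?thesis
      by (simp add: tot_to_cochain_def jh_def sum.atMost_shift)
  qed (simp add: tot_to_cochain_def support)
qed

text \<open>The two terms of the total differential at bidegree \<open>(p, m - p)\<close> together produce all
  faces of \<open>y\<close>: the horizontal one those deleting an entry of the front face, the vertical one
  those deleting an entry of the back face, and the two terms deleting \<open>y\<^sub>p\<close> cancel.\<close>
lemma dh_plus_dv_front_back:
  assumes pm: "p \<le> m"
  shows "dh p (m - p) G (front_face (Suc p) y, back_face (Suc p) (Suc m) y)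
           + dv p (m - p) G (front_face p y, back_face p (Suc m) y)
       = (\<Sum>i\<le>Suc m. sgnop i (G (front_face p (face m i y), back_face p m (face m i y))))"
proof -
  let ?h = "\<lambda>i. sgnop i (G (front_face p (face m i y), back_face p m (face m i y)))"
  let ?X = "G (front_face p y, back_face (Suc p) (Suc m) y)"
  have "back_face (Suc p) (Suc m) y \<in> tuples (m - p)"
    using back_face_in_tuples[of "Suc p" "Suc m" y] by simp
  then have "dh p (m - p) G (front_face (Suc p) y, back_face (Suc p) (Suc m) y)
      = (\<Sum>i\<le>Suc p. sgnop i (G (face p i (front_face (Suc p) y), back_face (Suc p) (Suc m) y)))"
    by (simp add: dh_def)
  also have "\<dots> = (\<Sum>i\<le>p. ?h i) + sgnop (Suc p) ?X"
    using pm by (simp add: face_front_face back_face_face_low face_front_face_last)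
  finally have dh: "dh p (m - p) G (front_face (Suc p) y, back_face (Suc p) (Suc m) y)
      = (\<Sum>i\<le>p. ?h i) + sgnop (Suc p) ?X" .
  have "back_face p (Suc m) y \<in> tuples (Suc (m - p))"
    using back_face_in_tuples[of p "Suc m" y] pm by (simp add: Suc_diff_le)
  then have "dv p (m - p) G (front_face p y, back_face p (Suc m) y)
      = sgnop p (\<Sum>j\<le>Suc (m - p). sgnop j (G (front_face p y, face (m - p) j (back_face p (Suc m) y))))"
    by (simp add: dv_def)
  also have "\<dots> = sgnop p (?X + (\<Sum>j\<le>m - p.
      sgnop (Suc j) (G (front_face p y, face (m - p) (Suc j) (back_face p (Suc m) y)))))"
    by (simp only: sum.atMost_Suc_shift) (simp add: face_back_face_first pm)
  also have "\<dots> = sgnop p ?X + (\<Sum>j\<le>m - p. ?h (Suc p + j))"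
    by (simp add: sgnop_add sgnop_sum sgnop_sgnop front_face_face_high back_face_face_high pm)
  finally have dv: "dv p (m - p) G (front_face p y, back_face p (Suc m) y)
      = sgnop p ?X + (\<Sum>j\<le>m - p. ?h (Suc p + j))" .
  show ?thesis
    unfolding dh dv sum_atMost_Suc_split[OF pm, of ?h] by simp
qed

lemma tot_to_cochain_dTot: "tot_to_cochain (Suc m) (dTot m F) = cdiff m (tot_to_cochain m F)"
proof (rule ext)
  fix y
  show "tot_to_cochain (Suc m) (dTot m F) y = cdiff m (tot_to_cochain m F) y"
  proof (cases "y \<in> tuples (Suc m)")
    case True
    let ?dh = "\<lambda>p. dh p (m - p) (F p) (front_face (Suc p) y, back_face (Suc p) (Suc m) y)"
    let ?dv = "\<lambda>p. dv p (m - p) (F p) (front_face p y, back_face p (Suc m) y)"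
    have "(\<Sum>p\<le>Suc m. (if 1 \<le> p then dh (p - 1) (Suc m - p) (F (p - 1)) else 0)
            (front_face p y, back_face p (Suc m) y)) = (\<Sum>p\<le>m. ?dh p)"
      by (simp only: sum.atMost_Suc_shift) simp
    moreover have "(\<Sum>p\<le>Suc m. (if p \<le> m then dv p (m - p) (F p) else 0)
            (front_face p y, back_face p (Suc m) y)) = (\<Sum>p\<le>m. ?dv p)"
      by simp
    ultimately have "tot_to_cochain (Suc m) (dTot m F) y = (\<Sum>p\<le>m. ?dh p) + (\<Sum>p\<le>m. ?dv p)"
      using True by (simp add: tot_to_cochain_def dTot_def sum.distrib)
    also have "\<dots> = (\<Sum>p\<le>m. \<Sum>i\<le>Suc m.
        sgnop i (F p (front_face p (face m i y), back_face p m (face m i y))))"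
      by (simp add: sum.distrib[symmetric] dh_plus_dv_front_back)
    also have "\<dots> = cdiff m (tot_to_cochain m F) y"
      using True by (subst sum.swap) (simp add: cdiff_def tot_to_cochain_def sgnop_sum)
    finally show ?thesis .
  qed (simp add: tot_to_cochain_def cdiff_def)
qed

section \<open>The concatenation homotopy between jv and jh\<close>

definition concat_tuple :: "nat \<Rightarrow> nat \<Rightarrow> (nat \<Rightarrow> 'g) \<Rightarrow> (nat \<Rightarrow> 'g) \<Rightarrow> (nat \<Rightarrow> 'g)" where
  "concat_tuple p q x y = restrict (\<lambda>k. if k \<le> p then x k else y (k - Suc p)) {..Suc (p + q)}"

definition concat_homotopy :: "nat \<Rightarrow> ((nat \<Rightarrow> 'g) \<Rightarrow> 'a::ab_group_add)
    \<Rightarrow> nat \<Rightarrow> (nat \<Rightarrow> 'g) \<times> (nat \<Rightarrow> 'g) \<Rightarrow> 'a" where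
  "concat_homotopy m f = (\<lambda>p. if p \<le> m then (\<lambda>(x, y). if x \<in> tuples p \<and> y \<in> tuples (m - p)
       then sgnop (Suc p) (f (concat_tuple p (m - p) x y)) else 0) else (\<lambda>_. 0))"

lemma concat_tuple_in_tuples [simp]: "concat_tuple p q x y \<in> tuples (Suc (p + q))"
  by (simp add: concat_tuple_def)

lemma face_concat_tuple_front:
  "i \<le> Suc p \<Longrightarrow> face (Suc (p + q)) i (concat_tuple (Suc p) q x y) = concat_tuple p q (face p i x) y"
  by (auto simp: face_def concat_tuple_def fun_eq_iff)

lemma face_concat_tuple_back:
  "face (p + Suc q) (Suc (p + j)) (concat_tuple p (Suc q) x y) = concat_tuple p q x (face q j y)"
  by (auto simp: face_def concat_tuple_def fun_eq_iff Suc_diff_le intro!: arg_cong[where f = y])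

lemma face_concat_tuple_first: "y \<in> tuples q \<Longrightarrow> face q 0 (concat_tuple 0 q x y) = y"
  by (rule tuples_eqI[of _ q]) (auto simp: face_def concat_tuple_def)

lemma face_concat_tuple_last: "x \<in> tuples p \<Longrightarrow> face p (Suc p) (concat_tuple p 0 x y) = x"
  by (rule tuples_eqI[of _ p]) (auto simp: face_def concat_tuple_def)

lemma concat_homotopy_zero [simp]: "concat_homotopy m 0 = 0"
  by (auto simp: concat_homotopy_def fun_eq_iff)

lemma cdiff_concat_tuple:
  "cdiff (p + q) f (concat_tuple p q x y)
     = (\<Sum>i\<le>p. sgnop i (f (face (p + q) i (concat_tuple p q x y))))
     + (\<Sum>j\<le>q. sgnop (Suc p + j) (f (face (p + q) (Suc p + j) (concat_tuple p q x y))))"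
  by (simp add: cdiff_def sum_atMost_Suc_split[of p "p + q"] del: sum.atMost_Suc)

lemma dh_concat_homotopy:
  assumes "x \<in> tuples (Suc p)" "y \<in> tuples q"
  shows "dh p q (concat_homotopy (p + q) f p) (x, y)
       = sgnop (Suc p) (\<Sum>i\<le>Suc p. sgnop i (f (face (Suc (p + q)) i (concat_tuple (Suc p) q x y))))"
  using assms
  by (simp add: dh_def concat_homotopy_def face_concat_tuple_front sgnop_sum sgnop_sgnop add.commute
      del: sum.atMost_Suc)

lemma dv_concat_homotopy:
  assumes "x \<in> tuples p" "y \<in> tuples (Suc q)"
  shows "dv p q (concat_homotopy (p + q) f p) (x, y)
       = sgnop p (\<Sum>j\<le>Suc q.
           sgnop (Suc p + j) (f (face (p + Suc q) (Suc p + j) (concat_tuple p (Suc q) x y))))"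
  using assms face_concat_tuple_back[of p q _ x y]
  by (simp add: dv_def concat_homotopy_def sgnop_sgnop add.commute del: sum.atMost_Suc)

lemma concat_homotopy_formula_at:
  assumes x: "x \<in> tuples p" and y: "y \<in> tuples q" and pq: "p + q = Suc m"
  shows "dTot m (concat_homotopy m f) p (x, y) + concat_homotopy (Suc m) (cdiff (Suc m) f) p (x, y)
       = jv (Suc m) f p (x, y) - jh (Suc m) f p (x, y)"
proof -
  define w where "w = concat_tuple p q x y"
  define A where "A = (\<Sum>i\<le>p. sgnop i (f (face (Suc m) i w)))"
  define B where "B = (\<Sum>j\<le>q. sgnop (Suc p + j) (f (face (Suc m) (Suc p + j) w)))"
  have q: "Suc m - p = q"
    using pq by simp
  have K: "concat_homotopy (Suc m) (cdiff (Suc m) f) p (x, y) = sgnop (Suc p) (A + B)"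
    using cdiff_concat_tuple[of p q f x y] x y pq q
    by (simp add: concat_homotopy_def A_def B_def w_def del: sgnop_simps)
  consider (front_empty) "p = 0" "q = Suc m" | (back_empty) "p = Suc m" "q = 0"
    | (inner) p' q' where "p = Suc p'" "q = Suc q'" "m = p' + Suc q'"
    using pq by (cases p; cases q) auto
  then show ?thesis
  proof cases
    case front_empty
    have "dTot m (concat_homotopy m f) p (x, y) = B"
      using dv_concat_homotopy[of x 0 y m f] x y front_empty by (simp add: dTot_def B_def w_def)
    moreover have "A = f y"
      using face_concat_tuple_first[OF y] front_empty by (simp add: A_def w_def)
    ultimately show ?thesis
      using K x y front_empty by (simp add: jv_def jh_def)
  next
    case back_empty
    have "dTot m (concat_homotopy m f) p (x, y) = sgnop (Suc m) A"
      using dh_concat_homotopy[of x m y 0 f] x y back_empty by (simp add: dTot_def A_def w_def)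
    moreover have "B = sgnop m (f x)"
      using face_concat_tuple_last[OF x] back_empty by (simp add: B_def w_def)
    ultimately show ?thesis
      using K x y back_empty by (simp add: jv_def jh_def sgnop_def)
  next
    case inner
    have "dTot m (concat_homotopy m f) p (x, y) = sgnop p A + sgnop p B"
      using dh_concat_homotopy[of x p' y q f] dv_concat_homotopy[of x p y q' f] x y inner
      by (simp add: dTot_def A_def B_def w_def)
    then show ?thesis
      using K inner pq by (simp add: jv_def jh_def sgnop_add)
  qed
qed

lemma concat_homotopy_formula:
  fixes f :: "(nat \<Rightarrow> 'g) \<Rightarrow> 'a::ab_group_add"
  shows "dTot m (concat_homotopy m f) + concat_homotopy (Suc m) (cdiff (Suc m) f)
       = jv (Suc m) f - jh (Suc m) f"
proof (intro ext)
  fix p and z :: "(nat \<Rightarrow> 'g) \<times> (nat \<Rightarrow> 'g)"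
  obtain x y where z: "z = (x, y)"
    by (cases z)
  show "(dTot m (concat_homotopy m f) + concat_homotopy (Suc m) (cdiff (Suc m) f)) p z
      = (jv (Suc m) f - jh (Suc m) f) p z"
  proof (cases "p \<le> Suc m \<and> x \<in> tuples p \<and> y \<in> tuples (Suc m - p)")
    case True
    then show ?thesis
      using concat_homotopy_formula_at[of x p y "Suc m - p" m f] z by simp
  next
    case False
    then show ?thesis
      using z by (auto simp: dTot_def dh_def dv_def concat_homotopy_def jv_def jh_def Suc_diff_le)
  qed
qed

lemma concat_homotopy_formula_0:
  fixes f :: "(nat \<Rightarrow> 'g) \<Rightarrow> 'a::ab_group_add"
  shows "concat_homotopy 0 (cdiff 0 f) = jv 0 f - jh 0 f"
proof (intro ext)
  fix p and z :: "(nat \<Rightarrow> 'g) \<times> (nat \<Rightarrow> 'g)"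
  obtain x y where z: "z = (x, y)"
    by (cases z)
  show "concat_homotopy 0 (cdiff 0 f) p z = (jv 0 f - jh 0 f) p z"
  proof (cases "p = 0 \<and> x \<in> tuples 0 \<and> y \<in> tuples 0")
    case True
    then show ?thesis
      using z cdiff_concat_tuple[of 0 0 f x y] face_concat_tuple_first[of y 0 x]
        face_concat_tuple_last[of x 0 y]
      by (simp add: concat_homotopy_def jv_def jh_def)
  next
    case False
    then show ?thesis
      using z by (auto simp: concat_homotopy_def jv_def jh_def)
  qed
qed

section \<open>Continuity and equivariance\<close>

lemma identity_nbhd_UNIV: "identity_nbhd UNIV"
  by (auto simp: identity_nbhd_def)

lemma identity_nbhd_Int: "identity_nbhd U \<Longrightarrow> identity_nbhd V \<Longrightarrow> identity_nbhd (U \<inter> V)"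
  unfolding identity_nbhd_def by (meson Int_iff Int_mono open_Int)

lemma identity_nbhd_INT:
  "finite A \<Longrightarrow> (\<And>i. i \<in> A \<Longrightarrow> identity_nbhd (U i)) \<Longrightarrow> identity_nbhd (\<Inter>i\<in>A. U i)"
  by (induction A rule: finite_induct) (simp_all add: identity_nbhd_UNIV identity_nbhd_Int)

lemma Gamma_subset_tuples: "Gamma U q \<subseteq> tuples q"
  by (auto simp: Gamma_def)

lemma Gamma_mono: "U \<subseteq> V \<Longrightarrow> Gamma U q \<subseteq> Gamma V q"
  by (auto simp: Gamma_def)

lemma back_face_in_Gamma: "y \<in> Gamma U n \<Longrightarrow> p \<le> n \<Longrightarrow> back_face p n y \<in> Gamma U (n - p)"
proof (cases "n - p = 0")
  case True
  then show ?thesis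
    using back_face_in_tuples[of p n y] by (simp add: Gamma_def)
qed (auto simp: Gamma_def back_face_def)

lemma topspace_PT [simp]: "topspace (PT n) = tuples n"
  by (simp add: PT_def tuples_def)

lemma continuous_map_PT_reindex:
  assumes "\<And>k. k \<le> m \<Longrightarrow> \<sigma> k \<le> n"
  shows "continuous_map (PT n) (PT m) (\<lambda>x. restrict (\<lambda>k. x (\<sigma> k)) {..m})"
  unfolding PT_def continuous_map_componentwise
  using assms by (auto intro: continuous_map_product_projection)

lemma continuous_map_front_face: "p \<le> n \<Longrightarrow> continuous_map (PT n) (PT p) (front_face p)"
  using continuous_map_PT_reindex[of p "\<lambda>k. k" n] by (simp add: front_face_def[abs_def])

lemma continuous_map_back_face: "p \<le> n \<Longrightarrow> continuous_map (PT n) (PT (n - p)) (back_face p n)"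
  unfolding back_face_def[abs_def] by (rule continuous_map_PT_reindex) simp

lemma continuous_map_concat_tuple:
  "continuous_map (prod_topology (PT p) (PT q)) (PT (Suc (p + q))) (\<lambda>z. concat_tuple p q (fst z) (snd z))"
  unfolding continuous_map_componentwise PT_def
proof (intro conjI ballI)
  fix k
  assume k: "k \<in> {..Suc (p + q)}"
  let ?X = "prod_topology (product_topology (\<lambda>_. euclidean) {..p})
    (product_topology (\<lambda>_. euclidean) {..q})"
  have "continuous_map ?X euclidean
      (if k \<le> p then (\<lambda>x. x k) \<circ> fst else (\<lambda>y. y (k - Suc p)) \<circ> snd)"
    using k by (auto intro!: continuous_map_compose[OF continuous_map_fst]
        continuous_map_compose[OF continuous_map_snd] continuous_map_product_projection)
  then show "continuous_map ?X euclidean (\<lambda>z. concat_tuple p q (fst z) (snd z) k)"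
    by (rule continuous_map_eq) (use k in \<open>auto simp: concat_tuple_def\<close>)
qed (auto simp: concat_tuple_def)

lemma front_face_tmul: "p \<le> n \<Longrightarrow> front_face p (tmul n g y) = tmul p g (front_face p y)"
  by (auto simp: front_face_def tmul_def fun_eq_iff)

lemma back_face_tmul: "p \<le> n \<Longrightarrow> back_face p n (tmul n g y) = tmul (n - p) g (back_face p n y)"
  by (auto simp: back_face_def tmul_def fun_eq_iff)

lemma concat_tuple_tmul:
  "concat_tuple p q (tmul p g x) (tmul q g y) = tmul (Suc (p + q)) g (concat_tuple p q x y)"
  by (auto simp: concat_tuple_def tmul_def fun_eq_iff)

context
  fixes act :: "'g::{topological_space,group_add} \<Rightarrow> 'a::{topological_space,ab_group_add} \<Rightarrow> 'a"
  assumes module: "top_G_module act"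
begin

lemma additive_act: "Modules.additive (act g)"
  by unfold_locales (use module in \<open>simp add: top_G_module_def\<close>)

lemma act_sgnop: "act g (sgnop i a) = sgnop i (act g a)"
  by (simp add: sgnop_def Modules.additive.minus[OF additive_act])

lemma continuous_map_module_add:
  assumes "continuous_map X euclidean f" "continuous_map X euclidean h"
  shows "continuous_map X euclidean (\<lambda>x. f x + h x :: 'a)"
proof -
  have "continuous_map euclidean euclidean (\<lambda>z::'a \<times> 'a. fst z + snd z)"
    using module by (simp add: top_G_module_def)
  from continuous_map_compose[OF continuous_map_pairedI[OF assms, unfolded prod_topology_euclidean] this]
  show ?thesis
    by (simp add: o_def)
qed

lemma continuous_map_module_uminus:
  assumes "continuous_map X euclidean f"
  shows "continuous_map X euclidean (\<lambda>x. - f x :: 'a)"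
proof -
  have "continuous_map euclidean euclidean (\<lambda>a::'a. - a)"
    using module by (simp add: top_G_module_def)
  from continuous_map_compose[OF assms this] show ?thesis
    by (simp add: o_def)
qed

lemma continuous_map_module_sum:
  "(\<And>i. i \<in> A \<Longrightarrow> continuous_map X euclidean (f i)) \<Longrightarrow> continuous_map X euclidean (\<lambda>x. \<Sum>i\<in>A. f i x :: 'a)"
  by (induction A rule: infinite_finite_induct) (simp_all add: continuous_map_module_add)

lemma add_subgroup_equivariant_maps:
  "add_subgroup {f. (\<forall>z. z \<notin> T \<longrightarrow> f z = 0) \<and> (\<forall>g. \<forall>z\<in>T. act g (f (t g z)) = f z)}"
  by (rule add_subgroupI) (simp_all add: Modules.additive.zero[OF additive_act]
      Modules.additive.add[OF additive_act] Modules.additive.minus[OF additive_act])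

lemma add_subgroup_continuous_maps: "add_subgroup {f. continuous_map X euclidean (f :: _ \<Rightarrow> 'a)}"
  by (rule add_subgroupI)
    (simp_all add: zero_fun_def plus_fun_def fun_Compl_def
      continuous_map_module_add continuous_map_module_uminus)

lemma add_subgroup_locally_continuous_maps:
  assumes mono: "\<And>U V. U \<subseteq> V \<Longrightarrow> S U \<subseteq> S V"
  shows "add_subgroup
    {f. \<exists>U. identity_nbhd U \<and> continuous_map (subtopology X (S U)) euclidean (f :: _ \<Rightarrow> 'a)}"
proof (rule add_subgroupI)
  show "0 \<in> {f. \<exists>U. identity_nbhd U \<and> continuous_map (subtopology X (S U)) euclidean (f :: _ \<Rightarrow> 'a)}"
    using identity_nbhd_UNIV by (auto simp: zero_fun_def)
next
  fix u v :: "_ \<Rightarrow> 'a"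
  assume "u \<in> {f. \<exists>U. identity_nbhd U \<and> continuous_map (subtopology X (S U)) euclidean f}"
    and "v \<in> {f. \<exists>U. identity_nbhd U \<and> continuous_map (subtopology X (S U)) euclidean f}"
  then obtain U V where "identity_nbhd U" "continuous_map (subtopology X (S U)) euclidean u"
    and "identity_nbhd V" "continuous_map (subtopology X (S V)) euclidean v"
    by blast
  moreover have "S (U \<inter> V) \<subseteq> S U" "S (U \<inter> V) \<subseteq> S V"
    by (simp_all add: mono)
  ultimately have "identity_nbhd (U \<inter> V)"
    "continuous_map (subtopology X (S (U \<inter> V))) euclidean (\<lambda>x. u x + v x)"
    by (auto intro: identity_nbhd_Int continuous_map_module_add continuous_map_from_subtopology_mono)
  then show "u + v \<in> {f. \<exists>U. identity_nbhd U \<and> continuous_map (subtopology X (S U)) euclidean f}"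
    by (auto simp: plus_fun_def)
qed (auto simp: fun_Compl_def intro: continuous_map_module_uminus)

lemma add_subgroup_Cc: "add_subgroup (Cc act n)"
proof -
  have eq: "Cc act n = {f. (\<forall>x. x \<notin> tuples n \<longrightarrow> f x = 0) \<and>
        (\<forall>g. \<forall>x\<in>tuples n. act g (f (tmul n (- g) x)) = f x)}
      \<inter> {f. continuous_map (PT n) euclidean f}"
    by (auto simp: Cc_def equivariant_def)
  show ?thesis
    unfolding eq by (intro add_subgroup_Int add_subgroup_equivariant_maps add_subgroup_continuous_maps)
qed

lemma add_subgroup_Clc: "add_subgroup (Clc act n)"
proof -
  have eq: "Clc act n = {f. (\<forall>x. x \<notin> tuples n \<longrightarrow> f x = 0) \<and>
        (\<forall>g. \<forall>x\<in>tuples n. act g (f (tmul n (- g) x)) = f x)}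
      \<inter> {f. \<exists>U. identity_nbhd U \<and> continuous_map (subtopology (PT n) (Gamma U n)) euclidean f}"
    by (auto simp: Clc_def equivariant_def)
  show ?thesis
    unfolding eq
    by (intro add_subgroup_Int add_subgroup_equivariant_maps add_subgroup_locally_continuous_maps Gamma_mono)
qed

lemma add_subgroup_Alc_fix: "add_subgroup (Alc_fix act p q)"
proof -
  have eq: "Alc_fix act p q = {f. (\<forall>z. z \<notin> tuples p \<times> tuples q \<longrightarrow> f z = 0) \<and>
        (\<forall>g. \<forall>z\<in>tuples p \<times> tuples q. act g (f (tmul p (- g) (fst z), tmul q (- g) (snd z))) = f z)}
      \<inter> {f. \<exists>U. identity_nbhd U \<and>
        continuous_map (subtopology (prod_topology (PT p) (PT q)) (tuples p \<times> Gamma U q)) euclidean f}"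
    by (auto simp: Alc_fix_def)
  show ?thesis
    unfolding eq
    by (intro add_subgroup_Int add_subgroup_equivariant_maps add_subgroup_locally_continuous_maps)
      (auto dest: Gamma_mono)
qed

lemma add_subgroup_Tot: "add_subgroup (Tot act n)"
  using add_subgroup_Alc_fix unfolding add_subgroup_def Tot_def
  by (auto simp: zero_fun_def[symmetric])

lemma cochain_complex_Cc: "cochain_complex (Cc act) cdiff"
  by (intro cochain_complex.intro add_subgroup_Cc additive_cdiff)

lemma cochain_complex_Clc: "cochain_complex (Clc act) cdiff"
  by (intro cochain_complex.intro add_subgroup_Clc additive_cdiff)

lemma cochain_complex_Tot: "cochain_complex (Tot act) dTot"
  by (intro cochain_complex.intro add_subgroup_Tot additive_dTot)

lemma Cc_subset_Clc: "Cc act n \<subseteq> Clc act n"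
  unfolding Cc_def Clc_def
  by (auto intro!: exI[of _ UNIV] identity_nbhd_UNIV continuous_map_from_subtopology)

lemma zero_in_Alc_fix: "(\<lambda>_. 0) \<in> Alc_fix act p q"
  using add_subgroup_Alc_fix[of p q] by (simp add: add_subgroup_def zero_fun_def)

lemma jh_in_Tot:
  assumes f: "f \<in> Clc act n"
  shows "jh n f \<in> Tot act n"
proof -
  obtain U where U: "identity_nbhd U" "continuous_map (subtopology (PT n) (Gamma U n)) euclidean f"
    using f unfolding Clc_def by blast
  let ?X = "subtopology (prod_topology (PT 0) (PT n)) (tuples 0 \<times> Gamma U n)"
  have "continuous_map ?X (subtopology (PT n) (Gamma U n)) snd"
    by (rule continuous_map_into_subtopology[OF continuous_map_subtopology_snd]) auto
  then have "continuous_map ?X euclidean (f \<circ> snd)"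
    using U(2) by (rule continuous_map_compose)
  then have "continuous_map ?X euclidean (jh n f 0)"
    by (rule continuous_map_eq) (use Gamma_subset_tuples in \<open>auto simp: jh_def\<close>)
  then have "jh n f 0 \<in> Alc_fix act 0 n"
    using f U(1) unfolding Alc_fix_def Clc_def equivariant_def by (auto simp: jh_def)
  then show ?thesis
    unfolding Tot_def using zero_in_Alc_fix by (auto simp: jh_def zero_fun_def)
qed

lemma jv_in_Tot:
  assumes f: "f \<in> Cc act n"
  shows "jv n f \<in> Tot act n"
proof -
  let ?X = "subtopology (prod_topology (PT n) (PT 0)) (tuples n \<times> Gamma UNIV 0)"
  have "continuous_map ?X euclidean (f \<circ> fst)"
    using f continuous_map_subtopology_fst unfolding Cc_def by (blast intro: continuous_map_compose)
  then have "continuous_map ?X euclidean (jv n f n)"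
    by (rule continuous_map_eq) (use Gamma_subset_tuples in \<open>auto simp: jv_def\<close>)
  then have "jv n f n \<in> Alc_fix act n 0"
    using f identity_nbhd_UNIV unfolding Alc_fix_def Cc_def equivariant_def by (auto simp: jv_def)
  then show ?thesis
    unfolding Tot_def using zero_in_Alc_fix by (auto simp: jv_def zero_fun_def)
qed

lemma tot_to_cochain_locally_continuous:
  assumes F: "F \<in> Tot act n"
  shows "\<exists>U. identity_nbhd U \<and>
    continuous_map (subtopology (PT n) (Gamma U n)) euclidean (tot_to_cochain n F)"
proof -
  let ?Y = "\<lambda>p U. subtopology (prod_topology (PT p) (PT (n - p))) (tuples p \<times> Gamma U (n - p))"
  have "\<forall>p\<in>{..n}. \<exists>U. identity_nbhd U \<and> continuous_map (?Y p U) euclidean (F p)"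
    using F by (auto simp: Tot_def Alc_fix_def)
  then obtain V where V: "\<And>p. p \<le> n \<Longrightarrow> identity_nbhd (V p)"
    "\<And>p. p \<le> n \<Longrightarrow> continuous_map (?Y p (V p)) euclidean (F p)"
    by (metis atMost_iff bchoice)
  define U where "U = (\<Inter>p\<le>n. V p)"
  let ?X = "subtopology (PT n) (Gamma U n)"
  have "continuous_map ?X euclidean (\<lambda>y. F p (front_face p y, back_face p n y))" if p: "p \<le> n" for p
  proof -
    have "continuous_map ?X (prod_topology (PT p) (PT (n - p))) (\<lambda>y. (front_face p y, back_face p n y))"
      by (intro continuous_map_pairedI continuous_map_from_subtopology
          continuous_map_front_face continuous_map_back_face p)
    moreover have "U \<subseteq> V p"
      using p by (auto simp: U_def)
    ultimately have "continuous_map ?X (?Y p (V p)) (\<lambda>y. (front_face p y, back_face p n y))"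
      by (intro continuous_map_into_subtopology)
        (use p back_face_in_Gamma Gamma_mono[of U "V p"] in fastforce)+
    from continuous_map_compose[OF this V(2)[OF p]] show ?thesis
      by (simp add: o_def)
  qed
  then have "continuous_map ?X euclidean (\<lambda>y. \<Sum>p\<le>n. F p (front_face p y, back_face p n y))"
    by (intro continuous_map_module_sum) simp
  then have "continuous_map ?X euclidean (tot_to_cochain n F)"
    by (rule continuous_map_eq) (use Gamma_subset_tuples in \<open>auto simp: tot_to_cochain_def\<close>)
  moreover have "identity_nbhd U"
    unfolding U_def by (rule identity_nbhd_INT) (simp_all add: V)
  ultimately show ?thesis
    by blast
qed

lemma equivariant_tot_to_cochain:
  assumes F: "F \<in> Tot act n"
  shows "equivariant act n (tot_to_cochain n F)"
  unfolding equivariant_def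
proof (intro allI ballI)
  fix g and y :: "nat \<Rightarrow> 'g"
  assume y: "y \<in> tuples n"
  have "act g (tot_to_cochain n F (tmul n (- g) y))
      = (\<Sum>p\<le>n. act g (F p (tmul p (- g) (front_face p y), tmul (n - p) (- g) (back_face p n y))))"
    by (simp add: tot_to_cochain_def Modules.additive.sum[OF additive_act]
        front_face_tmul back_face_tmul)
  also have "\<dots> = (\<Sum>p\<le>n. F p (front_face p y, back_face p n y))"
    using F by (intro sum.cong) (auto simp: Tot_def Alc_fix_def)
  finally show "act g (tot_to_cochain n F (tmul n (- g) y)) = tot_to_cochain n F y"
    using y by (simp add: tot_to_cochain_def)
qed

lemma tot_to_cochain_in_Clc: "F \<in> Tot act n \<Longrightarrow> tot_to_cochain n F \<in> Clc act n"
  using tot_to_cochain_locally_continuous equivariant_tot_to_cochain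
  by (auto simp: Clc_def tot_to_cochain_def)

lemma concat_homotopy_in_Tot:
  assumes f: "f \<in> Cc act (Suc m)"
  shows "concat_homotopy m f \<in> Tot act m"
  unfolding Tot_def
proof (intro CollectI conjI allI impI)
  fix p
  assume pm: "p \<le> m"
  let ?X = "subtopology (prod_topology (PT p) (PT (m - p))) (tuples p \<times> Gamma UNIV (m - p))"
  have "continuous_map (prod_topology (PT p) (PT (m - p))) euclidean
      (f \<circ> (\<lambda>z. concat_tuple p (m - p) (fst z) (snd z)))"
    using f continuous_map_concat_tuple[of p "m - p"] pm unfolding Cc_def
    by (auto intro: continuous_map_compose)
  then have "continuous_map ?X euclidean
      (\<lambda>z. sgnop (Suc p) (f (concat_tuple p (m - p) (fst z) (snd z))))"
    by (auto simp: sgnop_def o_def intro: continuous_map_module_uminus continuous_map_from_subtopology)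
  then have "continuous_map ?X euclidean (concat_homotopy m f p)"
    by (rule continuous_map_eq) (use Gamma_subset_tuples pm in \<open>auto simp: concat_homotopy_def\<close>)
  moreover have "act g (concat_homotopy m f p (tmul p (- g) x, tmul (m - p) (- g) y))
      = concat_homotopy m f p (x, y)"
    if "x \<in> tuples p" "y \<in> tuples (m - p)" for g x y
  proof -
    have "act g (f (concat_tuple p (m - p) (tmul p (- g) x) (tmul (m - p) (- g) y)))
        = f (concat_tuple p (m - p) x y)"
      using f concat_tuple_tmul[of p "m - p" "- g" x y] concat_tuple_in_tuples[of p "m - p" x y] pm
      by (simp add: Cc_def equivariant_def)
    then show ?thesis
      using that pm by (simp add: concat_homotopy_def act_sgnop del: sgnop_simps)
  qed
  ultimately show "concat_homotopy m f p \<in> Alc_fix act p (m - p)"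
    unfolding Alc_fix_def using identity_nbhd_UNIV pm by (auto simp: concat_homotopy_def)
qed (simp add: concat_homotopy_def zero_fun_def)

section \<open>The induced maps in cohomology\<close>

lemma cochain_map_jh: "cochain_map (Clc act) cdiff (Tot act) dTot jh"
  by (intro cochain_map.intro cochain_map_axioms.intro cochain_complex_Clc
      cochain_complex_Tot additive_jh jh_in_Tot jh_cdiff)

lemma cochain_map_jv: "cochain_map (Cc act) cdiff (Tot act) dTot jv"
  by (intro cochain_map.intro cochain_map_axioms.intro cochain_complex_Cc
      cochain_complex_Tot additive_jv jv_in_Tot jv_cdiff)

lemma cochain_map_tot_to_cochain: "cochain_map (Tot act) dTot (Clc act) cdiff tot_to_cochain"
  by (intro cochain_map.intro cochain_map_axioms.intro cochain_complex_Tot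
      cochain_complex_Clc additive_tot_to_cochain tot_to_cochain_in_Clc
      tot_to_cochain_dTot)

lemma cochain_map_Cc_Clc: "cochain_map (Cc act) cdiff (Clc act) cdiff (\<lambda>n f. f)"
  by (intro cochain_map.intro cochain_map_axioms.intro cochain_complex_Cc
      cochain_complex_Clc) (use Cc_subset_Clc in \<open>auto intro: Modules.additive.intro\<close>)

lemma jv_jh_cohomologous:
  assumes f: "f \<in> cocycles (Cc act) cdiff p"
  shows "coh_class (Tot act) dTot p (jv p f) = coh_class (Tot act) dTot p (jh p f)"
proof -
  interpret Tot: cochain_complex "Tot act" dTot
    by (rule cochain_complex_Tot)
  have "jv p f - jh p f \<in> coboundaries (Tot act) dTot p"
  proof (cases p)
    case 0
    then show ?thesis
      using f concat_homotopy_formula_0[of f] by (simp add: cocycles_def coboundaries_def)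
  next
    case (Suc m)
    then have "jv p f - jh p f = dTot m (concat_homotopy m f)"
      using f concat_homotopy_formula[of m f] by (simp add: cocycles_def)
    moreover have "concat_homotopy m f \<in> Tot act m"
      using f Suc concat_homotopy_in_Tot by (simp add: cocycles_def)
    ultimately show ?thesis
      using Suc by (simp add: coboundaries_def)
  qed
  then show ?thesis
    by (simp add: Tot.coh_class_eq_iff)
qed

end

theorem mainTheorem5:
  fixes act :: "'g::{topological_space,group_add} \<Rightarrow> 'a::{topological_space,ab_group_add} \<Rightarrow> 'a"
    and p :: nat
  assumes "top_group TYPE('g)"
    and "top_G_module act"
  shows "\<forall>c \<in> cohomology (Cc act) cdiff p.
           inv_into (cohomology (Clc act) cdiff p) (induced jh (Tot act) dTot p)
              (induced jv (Tot act) dTot p c)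
         = induced (\<lambda>n f. f) (Clc act) cdiff p c"
proof
  fix c
  assume "c \<in> cohomology (Cc act) cdiff p"
  then obtain f where f: "f \<in> cocycles (Cc act) cdiff p" and c: "c = coh_class (Cc act) cdiff p f"
    by (auto simp: cohomology_def)
  interpret H_jh: cochain_map "Clc act" cdiff "Tot act" dTot jh
    by (rule cochain_map_jh[OF assms(2)])
  interpret H_jv: cochain_map "Cc act" cdiff "Tot act" dTot jv
    by (rule cochain_map_jv[OF assms(2)])
  interpret inclusion: cochain_map "Cc act" cdiff "Clc act" cdiff "\<lambda>n f. f"
    by (rule cochain_map_Cc_Clc[OF assms(2)])
  have inj: "inj_on (induced jh (Tot act) dTot p) (cohomology (Clc act) cdiff p)"
    by (rule H_jh.inj_on_induced_left_inverse[OF cochain_map_tot_to_cochain[OF assms(2)]])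
      (simp add: tot_to_cochain_jh Clc_def)
  have "coh_class (Clc act) cdiff p f \<in> cohomology (Clc act) cdiff p"
    using f Cc_subset_Clc[OF assms(2)] by (auto simp: cohomology_def cocycles_def)
  moreover have "induced jv (Tot act) dTot p c
      = induced jh (Tot act) dTot p (coh_class (Clc act) cdiff p f)"
    using jv_jh_cohomologous[OF assms(2) f]
    by (simp add: c H_jv.induced_coh_class H_jh.induced_coh_class)
  ultimately show "inv_into (cohomology (Clc act) cdiff p) (induced jh (Tot act) dTot p)
      (induced jv (Tot act) dTot p c) = induced (\<lambda>n f. f) (Clc act) cdiff p c"
    by (simp add: inv_into_f_eq[OF inj] c inclusion.induced_coh_class)
qed

end
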